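(* Let $G$ be a countable locally finite group (every finite subset of $G$ is contained in a finite subgroup). Then the ballean $\mathcal{B}(G)$ is decomposable in a direct product of finite sets, i.e. it is asymorphic to $\mathcal{B}(Z)$ for some direct product $Z=\otimes_{\lambda<\delta}(Z_\lambda,e_\lambda)$ of a pointed family of finite sets $Z_\lambda$.
   Context: For an infinite group $G$ with identity $e$, $\mathcal{B}(G)=(G,\mathcal{F},B)$ where $\mathcal{F}=\{A\subseteq G: e\in A, |A|<|G|\}$ and $B(g,A)=gA$. For balleans $(X_1,P_1,B_1)$, $(X_2,P_2,B_2)$ (sets with families of balls $B(x,\alpha)\subseteq X$ indexed by $x\in X,\alpha\in P$), a map $f:X_1\to X_2$ is a $\prec$-mapping if for every $\alpha\in P_1$ there is $\beta\in P_2$ with $f(B_1(x,\alpha))\subseteq B_2(f(x),\beta)$ for all $x$; a bijection $f$ is an asymorphism if $f$ and $f^{-1}$ are $\prec$-mappings. Given an ordinal $\delta$ and non-empty sets $Z_\lambda$ ($\lambda<\delta$) with chosen points $e_\lambda\in Z_\lambda$, the direct product $Z=\otimes_{\lambda<\delta}(Z_\lambda,e_\lambda)$ is the set of functions $f$ on $\{\lambda:\lambda<\delta\}$ with $f(\lambda)\in Z_\lambda$ and $f(\lambda)=e_\lambda$ for all but finitely many $\lambda$; its ballean is $\mathcal{B}(Z)=(Z,\{\lambda:\lambda<\delta\},B)$ with $B(f,\lambda)=\{g\in Z: g(\lambda')=f(\lambda')\text{ for all }\lambda\le\lambda'<\delta\}$. *)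

theory Defs
  imports "HOL-Algebra.Coset" "HOL-Library.Countable_Set"
begin

text \<open>A ballean is given by a support set X, a set of radii P and a ball function
  B :: point => radius => set.\<close>

definition prec_mapping ::
  "'x set \<Rightarrow> 'p set \<Rightarrow> ('x \<Rightarrow> 'p \<Rightarrow> 'x set) \<Rightarrow>
   'y set \<Rightarrow> 'q set \<Rightarrow> ('y \<Rightarrow> 'q \<Rightarrow> 'y set) \<Rightarrow> ('x \<Rightarrow> 'y) \<Rightarrow> bool" where
  "prec_mapping X1 P1 B1 X2 P2 B2 f \<longleftrightarrow>
     (\<forall>x\<in>X1. f x \<in> X2) \<and>
     (\<forall>\<alpha>\<in>P1. \<exists>\<beta>\<in>P2. \<forall>x\<in>X1. f ` (B1 x \<alpha>) \<subseteq> B2 (f x) \<beta>)"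

definition asymorphism ::
  "'x set \<Rightarrow> 'p set \<Rightarrow> ('x \<Rightarrow> 'p \<Rightarrow> 'x set) \<Rightarrow>
   'y set \<Rightarrow> 'q set \<Rightarrow> ('y \<Rightarrow> 'q \<Rightarrow> 'y set) \<Rightarrow> ('x \<Rightarrow> 'y) \<Rightarrow> bool" where
  "asymorphism X1 P1 B1 X2 P2 B2 f \<longleftrightarrow>
     bij_betw f X1 X2 \<and>
     prec_mapping X1 P1 B1 X2 P2 B2 f \<and>
     prec_mapping X2 P2 B2 X1 P1 B1 (inv_into X1 f)"

definition asymorphic ::
  "'x set \<Rightarrow> 'p set \<Rightarrow> ('x \<Rightarrow> 'p \<Rightarrow> 'x set) \<Rightarrow>
   'y set \<Rightarrow> 'q set \<Rightarrow> ('y \<Rightarrow> 'q \<Rightarrow> 'y set) \<Rightarrow> bool" where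
  "asymorphic X1 P1 B1 X2 P2 B2 \<longleftrightarrow> (\<exists>f. asymorphism X1 P1 B1 X2 P2 B2 f)"

definition grp_radii :: "('a, 'b) monoid_scheme \<Rightarrow> 'a set set" where
  "grp_radii G = {A. A \<subseteq> carrier G \<and> \<one>\<^bsub>G\<^esub> \<in> A \<and> (card_of A, card_of (carrier G)) \<in> ordLess}"

definition grp_ball :: "('a, 'b) monoid_scheme \<Rightarrow> 'a \<Rightarrow> 'a set \<Rightarrow> 'a set" where
  "grp_ball G g A = g <#\<^bsub>G\<^esub> A"

definition locally_finite_group :: "('a, 'b) monoid_scheme \<Rightarrow> bool" where
  "locally_finite_group G \<longleftrightarrow> group G \<and>
     (\<forall>A. A \<subseteq> carrier G \<and> finite A \<longrightarrow> (\<exists>H. subgroup H G \<and> finite H \<and> A \<subseteq> H))"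

text \<open>The ordinal delta is represented by a well-order r; the indices lambda < delta are
  the elements of Field r, and lambda <= lambda' is (lambda, lambda') in r.\<close>

definition dprod :: "('i \<times> 'i) set \<Rightarrow> ('i \<Rightarrow> 'z set) \<Rightarrow> ('i \<Rightarrow> 'z) \<Rightarrow> ('i \<Rightarrow> 'z) set" where
  "dprod r Zs e = {f. (\<forall>i\<in>Field r. f i \<in> Zs i) \<and> (\<forall>i. i \<notin> Field r \<longrightarrow> f i = undefined)
                       \<and> finite {i\<in>Field r. f i \<noteq> e i}}"

definition dprod_ball :: "('i \<times> 'i) set \<Rightarrow> ('i \<Rightarrow> 'z set) \<Rightarrow> ('i \<Rightarrow> 'z) \<Rightarrow>
    ('i \<Rightarrow> 'z) \<Rightarrow> 'i \<Rightarrow> ('i \<Rightarrow> 'z) set" where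
  "dprod_ball r Zs e f i = {g \<in> dprod r Zs e. \<forall>j. (i, j) \<in> r \<longrightarrow> g j = f j}"

end

theory Submission
  imports Defs
begin

text \<open>Exhaust \<open>G\<close> by a chain \<open>{1} = H\<^sub>0 \<subseteq> H\<^sub>1 \<subseteq> \<dots>\<close> of finite subgroups and fix left
  transversals \<open>T\<^sub>n \<ni> 1\<close> of \<open>H\<^sub>n\<close> in \<open>H\<^sub>n\<^sub>+\<^sub>1\<close>. Every element of \<open>G\<close> is uniquely a mixed-radix
  product \<open>t\<^sub>N\<^sub>-\<^sub>1 \<cdots> t\<^sub>0\<close> with digits \<open>t\<^sub>k \<in> T\<^sub>k\<close>, and two such products lie in the same left
  coset of \<open>H\<^sub>n\<close> exactly when their digits agree from position \<open>n\<close> on. So reading digit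
  sequences as products is a bijection from \<open>\<otimes>(T\<^sub>n, 1)\<close> onto \<open>G\<close> that carries the balls
  \<open>B(x, n)\<close> of the product onto the cosets \<open>gH\<^sub>n\<close>. Since the radii of the ballean of \<open>G\<close> are the finite
  sets containing \<open>1\<close>, each lies in some \<open>H\<^sub>n\<close> and each \<open>H\<^sub>n\<close> is one, so this bijection is an
  asymorphism.\<close>

lemma ordLess_countable_infinite_iff_finite:
  assumes "countable C" and "infinite C"
  shows "(card_of A, card_of C) \<in> ordLess \<longleftrightarrow> finite A"
proof
  assume less: "(card_of A, card_of C) \<in> ordLess"
  show "finite A"
  proof (rule ccontr)
    assume "infinite A"
    then have "(card_of (UNIV :: nat set), card_of A) \<in> ordLeq"
      by (simp add: infinite_iff_card_of_nat)
    moreover have "(card_of C, card_of (UNIV :: nat set)) \<in> ordLeq"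
      using assms(1) unfolding countable_def by (auto simp: card_of_ordLeq[symmetric])
    ultimately show False using less not_ordLess_ordLeq ordLeq_transitive by blast
  qed
next
  assume "finite A"
  then show "(card_of A, card_of C) \<in> ordLess"
    using finite_ordLess_infinite[OF card_of_Well_order card_of_Well_order] assms(2)
    by (simp add: Field_card_of)
qed

lemma (in group) grp_radii_iff:
  assumes "countable (carrier G)" and "infinite (carrier G)"
  shows "A \<in> grp_radii G \<longleftrightarrow> A \<subseteq> carrier G \<and> \<one> \<in> A \<and> finite A"
  using ordLess_countable_infinite_iff_finite[OF assms] unfolding grp_radii_def by blast

lemma (in group) mem_l_coset_iff:
  assumes "H \<subseteq> carrier G" and "x \<in> carrier G" and "y \<in> carrier G"
  shows "y \<in> x <# H \<longleftrightarrow> inv x \<otimes> y \<in> H"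
proof
  assume "y \<in> x <# H"
  then obtain h where "h \<in> H" and "y = x \<otimes> h" unfolding l_coset_def by blast
  then show "inv x \<otimes> y \<in> H" using assms by (auto simp: m_assoc[symmetric])
next
  assume "inv x \<otimes> y \<in> H"
  moreover have "y = x \<otimes> (inv x \<otimes> y)" using assms by (simp add: m_assoc[symmetric])
  ultimately show "y \<in> x <# H" unfolding l_coset_def by blast
qed

lemma (in group) l_coset_self:
  assumes "subgroup H G" and "x \<in> carrier G"
  shows "x \<in> x <# H"
  using assms subgroup.one_closed unfolding l_coset_def by force

lemma (in group) l_coset_eq_iff:
  assumes H: "subgroup H G" and x: "x \<in> carrier G" and y: "y \<in> carrier G"
  shows "x <# H = y <# H \<longleftrightarrow> inv x \<otimes> y \<in> H"
proof
  have "y \<in> y <# H" using l_coset_self[OF H y] .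
  moreover assume "x <# H = y <# H"
  ultimately show "inv x \<otimes> y \<in> H"
    using mem_l_coset_iff[OF subgroup.subset[OF H] x y] by simp
next
  assume "inv x \<otimes> y \<in> H"
  then have "y \<in> x <# H" using mem_l_coset_iff[OF subgroup.subset[OF H] x y] by simp
  then show "x <# H = y <# H" using l_repr_independence[OF _ x H] by simp
qed

lemma (in group) l_coset_mult_absorb:
  assumes H: "subgroup H G" and x: "x \<in> carrier G" and h: "h \<in> H"
  shows "(x \<otimes> h) <# H = x <# H"
proof -
  have hc: "h \<in> carrier G" using subgroup.mem_carrier[OF H h] .
  have "inv (x \<otimes> h) \<otimes> x = inv h" using x hc by (simp add: inv_mult_group m_assoc)
  then have "inv (x \<otimes> h) \<otimes> x \<in> H" using subgroup.m_inv_closed[OF H h] by simp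
  then show ?thesis using l_coset_eq_iff[OF H m_closed[OF x hc] x] by simp
qed

lemma (in group) l_coset_mult_cancel:
  assumes "subgroup H G" and "c \<in> carrier G" and "x \<in> carrier G" and "y \<in> carrier G"
  shows "(c \<otimes> x) <# H = (c \<otimes> y) <# H \<longleftrightarrow> x <# H = y <# H"
proof -
  have "inv (c \<otimes> x) \<otimes> (c \<otimes> y) = inv x \<otimes> y"
    using assms(2-4) by (simp add: inv_mult_group m_assoc) (simp add: m_assoc[symmetric])
  then show ?thesis using l_coset_eq_iff[OF assms(1)] assms(2-4) by simp
qed

lemma (in group) l_coset_eq_mono:
  assumes "subgroup H G" and "subgroup K G" and "H \<subseteq> K"
    and "x \<in> carrier G" and "y \<in> carrier G" and "x <# H = y <# H"
  shows "x <# K = y <# K"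
  using assms l_coset_eq_iff[OF assms(1,4,5)] l_coset_eq_iff[OF assms(2,4,5)] by blast

text \<open>Choosing \<open>1\<close> as representative of the coset \<open>H\<close> itself puts \<open>1\<close> into every
  transversal; it becomes the base point of the direct product.\<close>

definition coset_rep :: "('a, 'b) monoid_scheme \<Rightarrow> 'a set \<Rightarrow> 'a" where
  "coset_rep G C = (if \<one>\<^bsub>G\<^esub> \<in> C then \<one>\<^bsub>G\<^esub> else (SOME t. t \<in> C))"

definition left_transversal :: "('a, 'b) monoid_scheme \<Rightarrow> 'a set \<Rightarrow> 'a set \<Rightarrow> 'a set" where
  "left_transversal G H K = (\<lambda>k. coset_rep G (k <#\<^bsub>G\<^esub> H)) ` K"

context group
begin

lemma coset_rep_in_l_coset:
  assumes "subgroup H G" and "x \<in> carrier G"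
  shows "coset_rep G (x <# H) \<in> x <# H"
  using l_coset_self[OF assms] unfolding coset_rep_def by (metis someI)

lemma coset_rep_l_coset:
  assumes "subgroup H G" and "x \<in> carrier G"
  shows "coset_rep G (x <# H) <# H = x <# H"
  using l_repr_independence[OF coset_rep_in_l_coset[OF assms] assms(2,1)] by simp

context
  fixes H K
  assumes H: "subgroup H G" and K: "subgroup K G" and HK: "H \<subseteq> K"
begin

lemma one_in_left_transversal: "\<one> \<in> left_transversal G H K"
proof -
  have "\<one> \<in> \<one> <# H" using l_coset_self[OF H] by simp
  then show ?thesis
    using subgroup.one_closed[OF K] unfolding left_transversal_def coset_rep_def
    by (force intro!: image_eqI[of _ _ \<one>])
qed

lemma left_transversal_subset: "left_transversal G H K \<subseteq> K"
proof
  fix t assume "t \<in> left_transversal G H K"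
  then obtain k where k: "k \<in> K" and t: "t = coset_rep G (k <# H)"
    unfolding left_transversal_def by blast
  have kc: "k \<in> carrier G" using k subgroup.subset[OF K] by blast
  obtain h where "h \<in> H" and "t = k \<otimes> h"
    using coset_rep_in_l_coset[OF H kc] t unfolding l_coset_def by blast
  then show "t \<in> K" using k HK subgroup.m_closed[OF K] by blast
qed

lemma left_transversal_cover:
  assumes "k \<in> K"
  shows "\<exists>t\<in>left_transversal G H K. t <# H = k <# H"
  using assms coset_rep_l_coset[OF H] subgroup.subset[OF K]
  unfolding left_transversal_def by blast

lemma left_transversal_unique:
  assumes "s \<in> left_transversal G H K" and "t \<in> left_transversal G H K"
    and "s <# H = t <# H"
  shows "s = t"
proof -
  obtain k l where "k \<in> K" "l \<in> K"
    and s: "s = coset_rep G (k <# H)" and t: "t = coset_rep G (l <# H)"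
    using assms(1,2) unfolding left_transversal_def by blast
  then have "k <# H = l <# H"
    using assms(3) coset_rep_l_coset[OF H] subgroup.subset[OF K] by (metis subsetD)
  then show ?thesis using s t by simp
qed

end

end

lemma dprod_natLeq_iff: "x \<in> dprod natLeq Zs e \<longleftrightarrow> (\<forall>n. x n \<in> Zs n) \<and> finite {n. x n \<noteq> e n}"
  unfolding dprod_def Field_natLeq by simp

lemma dprod_natLeq_relabel:
  assumes inv: "\<And>z. z \<in> A \<Longrightarrow> d (c z) = z"
    and Zs: "\<And>n. Zs n \<subseteq> A" and e: "\<And>n. e n \<in> A"
  defines "D \<equiv> dprod natLeq (\<lambda>n. c ` Zs n) (\<lambda>n. c (e n))"
  shows "bij_betw (\<lambda>x. d \<circ> x) D (dprod natLeq Zs e)"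
    and "x \<in> D \<Longrightarrow> y \<in> D \<Longrightarrow> d (x k) = d (y k) \<longleftrightarrow> x k = y k"
proof -
  have D_iff: "x \<in> D \<longleftrightarrow> (\<forall>n. x n \<in> c ` Zs n) \<and> finite {n. x n \<noteq> c (e n)}" for x
    unfolding D_def dprod_natLeq_iff ..
  note E_iff = dprod_natLeq_iff[of _ Zs e]
  have decode: "d (x n) \<in> Zs n \<and> c (d (x n)) = x n" if x: "x \<in> D" for x n
  proof -
    obtain z where "z \<in> Zs n" and "x n = c z" using x unfolding D_iff by blast
    moreover have "d (c z) = z" using \<open>z \<in> Zs n\<close> Zs inv by blast
    ultimately show ?thesis by simp
  qed
  show "bij_betw (\<lambda>x. d \<circ> x) D (dprod natLeq Zs e)"
  proof (rule bij_betwI[where g = "\<lambda>y. c \<circ> y"])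
    show "(\<lambda>x. d \<circ> x) \<in> D \<rightarrow> dprod natLeq Zs e"
    proof
      fix x assume x: "x \<in> D"
      have "{n. d (x n) \<noteq> e n} \<subseteq> {n. x n \<noteq> c (e n)}" using inv[OF e] by auto
      moreover have "finite {n. x n \<noteq> c (e n)}" using x unfolding D_iff by blast
      ultimately show "d \<circ> x \<in> dprod natLeq Zs e"
        using decode[OF x] unfolding E_iff by (simp add: finite_subset)
    qed
    show "(\<lambda>y. c \<circ> y) \<in> dprod natLeq Zs e \<rightarrow> D"
    proof
      fix y assume y: "y \<in> dprod natLeq Zs e"
      have "{n. c (y n) \<noteq> c (e n)} \<subseteq> {n. y n \<noteq> e n}" by auto
      moreover have "finite {n. y n \<noteq> e n}" using y unfolding E_iff by blast
      ultimately show "c \<circ> y \<in> D" using y unfolding D_iff E_iff by (simp add: finite_subset)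
    qed
    show "c \<circ> (d \<circ> x) = x" if "x \<in> D" for x using decode[OF that] by auto
    show "d \<circ> (c \<circ> y) = y" if "y \<in> dprod natLeq Zs e" for y
    proof
      fix n
      have "y n \<in> A" using that Zs unfolding E_iff by blast
      then show "(d \<circ> (c \<circ> y)) n = y n" using inv by simp
    qed
  qed
  assume x: "x \<in> D" and y: "y \<in> D"
  show "d (x k) = d (y k) \<longleftrightarrow> x k = y k"
  proof
    assume "d (x k) = d (y k)"
    then have "c (d (x k)) = c (d (y k))" by simp
    then show "x k = y k" using decode[OF x] decode[OF y] by simp
  qed simp
qed

lemma dprod_ball_natLeq_iff:
  "y \<in> dprod_ball natLeq Zs e x n \<longleftrightarrow> y \<in> dprod natLeq Zs e \<and> (\<forall>k\<ge>n. y k = x k)"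
  unfolding dprod_ball_def natLeq_def by simp

lemma prec_mapping_cong:
  assumes "\<And>x \<alpha>. x \<in> X1 \<Longrightarrow> \<alpha> \<in> P1 \<Longrightarrow> B1 x \<alpha> \<subseteq> X1" and "\<And>x. x \<in> X1 \<Longrightarrow> f x = g x"
  shows "prec_mapping X1 P1 B1 X2 P2 B2 f \<longleftrightarrow> prec_mapping X1 P1 B1 X2 P2 B2 g"
proof -
  have "f ` B1 x \<alpha> = g ` B1 x \<alpha>" if "x \<in> X1" "\<alpha> \<in> P1" for x \<alpha>
    using assms that by (meson image_cong subsetD)
  then show ?thesis unfolding prec_mapping_def using assms(2) by (metis (no_types, lifting))
qed

locale finite_subgroup_chain = group G for G :: "('a, 'b) monoid_scheme" (structure) +
  fixes H :: "nat \<Rightarrow> 'a set"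
  assumes subgroup_H: "subgroup (H n) G"
    and finite_H: "finite (H n)"
    and H_0: "H 0 = {\<one>}"
    and H_Suc: "H n \<subseteq> H (Suc n)"
    and carrier_eq_UN_H: "carrier G = (\<Union>n. H n)"
begin

abbreviation transv :: "nat \<Rightarrow> 'a set" where
  "transv n \<equiv> left_transversal G (H n) (H (Suc n))"

lemmas one_in_transv = one_in_left_transversal[OF subgroup_H subgroup_H H_Suc]
lemmas transv_subset = left_transversal_subset[OF subgroup_H subgroup_H H_Suc]
lemmas transv_cover = left_transversal_cover[OF subgroup_H subgroup_H H_Suc]
lemmas transv_unique = left_transversal_unique[OF subgroup_H subgroup_H H_Suc]

lemma H_mono: "m \<le> n \<Longrightarrow> H m \<subseteq> H n"
  using lift_Suc_mono_le[of H] H_Suc by blast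

lemma H_subset_carrier: "H n \<subseteq> carrier G"
  using subgroup.subset[OF subgroup_H] .

lemma transv_subset_carrier: "transv n \<subseteq> carrier G"
  using transv_subset H_subset_carrier by blast

lemma countable_carrier: "countable (carrier G)"
  unfolding carrier_eq_UN_H using finite_H by (simp add: countable_finite)

lemma finite_subset_H:
  assumes "finite A" and "A \<subseteq> carrier G"
  shows "\<exists>n. A \<subseteq> H n"
  using assms
proof (induction A rule: finite_induct)
  case empty
  then show ?case by blast
next
  case (insert a A)
  then obtain m n where "a \<in> H m" and "A \<subseteq> H n" using carrier_eq_UN_H by blast
  then have "insert a A \<subseteq> H (max m n)" using H_mono[of m "max m n"] H_mono[of n "max m n"] by auto
  then show ?case by blast
qed

primrec digit_prod :: "(nat \<Rightarrow> 'a) \<Rightarrow> nat \<Rightarrow> 'a" where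
  "digit_prod a 0 = \<one>"
| "digit_prod a (Suc n) = a n \<otimes> digit_prod a n"

lemma digit_prod_cong: "(\<And>k. k < n \<Longrightarrow> a k = b k) \<Longrightarrow> digit_prod a n = digit_prod b n"
  by (induction n) auto

lemma digit_prod_in_H:
  assumes "\<forall>k. a k \<in> transv k"
  shows "digit_prod a n \<in> H n"
proof (induction n)
  case 0
  then show ?case using subgroup.one_closed[OF subgroup_H] by simp
next
  case (Suc n)
  then show ?case
    using assms transv_subset H_Suc subgroup.m_closed[OF subgroup_H] by (simp add: subset_iff)
qed

lemma digit_prod_stable:
  assumes "\<forall>k. a k \<in> transv k" and "\<forall>k\<ge>N. a k = \<one>" and "N \<le> M"
  shows "digit_prod a M = digit_prod a N"
  using assms(3)
proof (induction M rule: dec_induct)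
  case (step M)
  have "digit_prod a M \<in> carrier G" using digit_prod_in_H[OF assms(1)] H_subset_carrier by blast
  then show ?case using step assms(2) by simp
qed simp

lemma transv_mult_coset_eq_iff:
  assumes "n \<le> N" and s: "s \<in> transv N" and t: "t \<in> transv N"
    and p: "p \<in> H N" and q: "q \<in> H N"
  shows "(s \<otimes> p) <# H n = (t \<otimes> q) <# H n \<longleftrightarrow> s = t \<and> p <# H n = q <# H n"
proof -
  have c: "s \<in> carrier G" "t \<in> carrier G" "p \<in> carrier G" "q \<in> carrier G"
    using s t p q transv_subset H_subset_carrier by blast+
  show ?thesis
  proof
    assume eq: "(s \<otimes> p) <# H n = (t \<otimes> q) <# H n"
    \<comment> \<open>modulo the coarser \<open>H N\<close> the lower factors disappear, leaving only the top digit\<close>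
    then have "(s \<otimes> p) <# H N = (t \<otimes> q) <# H N"
      using l_coset_eq_mono[OF subgroup_H subgroup_H H_mono[OF \<open>n \<le> N\<close>]] c by simp
    then have "s <# H N = t <# H N" using l_coset_mult_absorb[OF subgroup_H] p q c by simp
    then have "s = t" using transv_unique s t by blast
    then show "s = t \<and> p <# H n = q <# H n" using eq l_coset_mult_cancel[OF subgroup_H] c by simp
  qed (use l_coset_mult_cancel[OF subgroup_H] c in simp)
qed

lemma digit_prod_coset_eq_iff:
  assumes a: "\<forall>k. a k \<in> transv k" and b: "\<forall>k. b k \<in> transv k"
  shows "digit_prod a N <# H n = digit_prod b N <# H n \<longleftrightarrow>
    (\<forall>k. n \<le> k \<longrightarrow> k < N \<longrightarrow> a k = b k)"
proof (induction N)
  case 0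
  then show ?case by simp
next
  case (Suc N)
  show ?case
  proof (cases "N < n")
    case True
    then have "H (Suc N) \<subseteq> H n" using H_mono by simp
    then have "digit_prod a (Suc N) \<in> H n" "digit_prod b (Suc N) \<in> H n"
      using digit_prod_in_H[OF a] digit_prod_in_H[OF b] by blast+
    then have "digit_prod a (Suc N) <# H n = digit_prod b (Suc N) <# H n"
      using coset_join3[OF _ subgroup_H] H_subset_carrier by blast
    then show ?thesis using True by simp
  next
    case False
    then have "digit_prod a (Suc N) <# H n = digit_prod b (Suc N) <# H n \<longleftrightarrow>
        a N = b N \<and> digit_prod a N <# H n = digit_prod b N <# H n"
      using transv_mult_coset_eq_iff[of n N "a N" "b N"] a b digit_prod_in_H[OF a] digit_prod_in_H[OF b]
      by simp
    moreover have "(\<forall>k. n \<le> k \<longrightarrow> k < Suc N \<longrightarrow> a k = b k) \<longleftrightarrow>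
        a N = b N \<and> (\<forall>k. n \<le> k \<longrightarrow> k < N \<longrightarrow> a k = b k)"
      using False less_Suc_eq not_less by blast
    ultimately show ?thesis using Suc.IH by simp
  qed
qed

definition digit_seqs :: "(nat \<Rightarrow> 'a) set" where
  "digit_seqs = dprod natLeq transv (\<lambda>_. \<one>)"

lemma digit_seqs_iff: "a \<in> digit_seqs \<longleftrightarrow> (\<forall>k. a k \<in> transv k) \<and> finite {k. a k \<noteq> \<one>}"
  unfolding digit_seqs_def dprod_natLeq_iff ..

lemma digit_seqs_digits: "a \<in> digit_seqs \<Longrightarrow> a k \<in> transv k"
  unfolding digit_seqs_iff by blast

lemma digit_seqs_eventually_one:
  assumes "a \<in> digit_seqs"
  obtains N where "\<forall>k\<ge>N. a k = \<one>"
proof -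
  obtain N where "{k. a k \<noteq> \<one>} \<subseteq> {..<N}"
    using assms finite_nat_bounded unfolding digit_seqs_iff by blast
  then have "\<forall>k\<ge>N. a k = \<one>" by auto
  then show ?thesis by (rule that)
qed

definition expand :: "(nat \<Rightarrow> 'a) \<Rightarrow> 'a" where
  "expand a = digit_prod a (SOME N. \<forall>k\<ge>N. a k = \<one>)"

lemma expand_eq_digit_prod:
  assumes a: "a \<in> digit_seqs" and N: "\<forall>k\<ge>N. a k = \<one>"
  shows "expand a = digit_prod a N"
proof -
  let ?N0 = "SOME N. \<forall>k\<ge>N. a k = \<one>"
  have N0: "\<forall>k\<ge>?N0. a k = \<one>" using N by (rule someI)
  have digits: "\<forall>k. a k \<in> transv k" using digit_seqs_digits[OF a] by blast
  have "digit_prod a (max ?N0 N) = digit_prod a ?N0"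
    using digit_prod_stable[OF digits N0 max.cobounded1] .
  moreover have "digit_prod a (max ?N0 N) = digit_prod a N"
    using digit_prod_stable[OF digits N max.cobounded2] .
  ultimately show ?thesis unfolding expand_def by simp
qed

lemma expand_in_carrier:
  assumes "a \<in> digit_seqs"
  shows "expand a \<in> carrier G"
proof -
  obtain N where "\<forall>k\<ge>N. a k = \<one>" using digit_seqs_eventually_one[OF assms] .
  then have "expand a = digit_prod a N" by (rule expand_eq_digit_prod[OF assms])
  moreover have "digit_prod a N \<in> H N"
    using digit_prod_in_H digit_seqs_digits[OF assms] by blast
  ultimately show ?thesis using H_subset_carrier[of N] by auto
qed

lemma expand_coset_eq_iff:
  assumes a: "a \<in> digit_seqs" and b: "b \<in> digit_seqs"
  shows "expand a <# H n = expand b <# H n \<longleftrightarrow> (\<forall>k\<ge>n. a k = b k)"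
proof -
  obtain Na where Na: "\<forall>k\<ge>Na. a k = \<one>" using digit_seqs_eventually_one[OF a] .
  obtain Nb where Nb: "\<forall>k\<ge>Nb. b k = \<one>" using digit_seqs_eventually_one[OF b] .
  define N where "N = max n (max Na Nb)"
  have aN: "\<forall>k\<ge>N. a k = \<one>" and bN: "\<forall>k\<ge>N. b k = \<one>"
    using Na Nb unfolding N_def by simp_all
  have "expand a <# H n = expand b <# H n \<longleftrightarrow> digit_prod a N <# H n = digit_prod b N <# H n"
    using expand_eq_digit_prod[OF a aN] expand_eq_digit_prod[OF b bN] by simp
  also have "\<dots> \<longleftrightarrow> (\<forall>k. n \<le> k \<longrightarrow> k < N \<longrightarrow> a k = b k)"
    using digit_prod_coset_eq_iff digit_seqs_digits[OF a] digit_seqs_digits[OF b] by simp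
  also have "\<dots> \<longleftrightarrow> (\<forall>k\<ge>n. a k = b k)"
  proof
    assume below: "\<forall>k. n \<le> k \<longrightarrow> k < N \<longrightarrow> a k = b k"
    show "\<forall>k\<ge>n. a k = b k"
    proof (intro allI impI)
      fix k assume "n \<le> k"
      then show "a k = b k" using below aN bN by (cases "k < N") simp_all
    qed
  qed simp
  finally show ?thesis .
qed

lemma digit_prod_surj:
  assumes "g \<in> H N"
  shows "\<exists>a\<in>digit_seqs. (\<forall>k\<ge>N. a k = \<one>) \<and> digit_prod a N = g"
  using assms
proof (induction N arbitrary: g)
  case 0
  then have "(\<lambda>_. \<one>) \<in> digit_seqs" and "g = \<one>"
    using H_0 one_in_transv by (auto simp: digit_seqs_iff)
  then show ?case by (intro bexI[of _ "\<lambda>_. \<one>"]) simp_all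
next
  case (Suc N)
  obtain t where t: "t \<in> transv N" and "t <# H N = g <# H N"
    using transv_cover[OF Suc.prems] by blast
  moreover have tc: "t \<in> carrier G" and gc: "g \<in> carrier G"
    using t transv_subset Suc.prems H_subset_carrier by blast+
  ultimately have "inv t \<otimes> g \<in> H N"
    using l_coset_eq_iff[OF subgroup_H tc gc] by simp
  then obtain a' where a': "a' \<in> digit_seqs" "\<forall>k\<ge>N. a' k = \<one>" and
    prod: "digit_prod a' N = inv t \<otimes> g"
    using Suc.IH by blast
  define a where "a = a'(N := t)"
  have "{k. a k \<noteq> \<one>} \<subseteq> insert N {k. a' k \<noteq> \<one>}" unfolding a_def by auto
  then have "finite {k. a k \<noteq> \<one>}"
    using a'(1) finite_subset unfolding digit_seqs_iff by blast
  then have "a \<in> digit_seqs" using a'(1) t unfolding digit_seqs_iff a_def by simp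
  moreover have "\<forall>k\<ge>Suc N. a k = \<one>" using a'(2) unfolding a_def by simp
  moreover have "digit_prod a (Suc N) = t \<otimes> digit_prod a' N"
    using digit_prod_cong[of N a a'] unfolding a_def by simp
  then have "digit_prod a (Suc N) = g" using prod tc gc by (simp add: m_assoc[symmetric])
  ultimately show ?case by blast
qed

lemma bij_betw_expand: "bij_betw expand digit_seqs (carrier G)"
proof (rule bij_betw_imageI)
  show "inj_on expand digit_seqs"
  proof (rule inj_onI)
    fix a b assume a: "a \<in> digit_seqs" and b: "b \<in> digit_seqs" and "expand a = expand b"
    then have "\<forall>k\<ge>0. a k = b k" using expand_coset_eq_iff[OF a b, of 0] by simp
    then show "a = b" by auto
  qed
  show "expand ` digit_seqs = carrier G"
  proof
    show "expand ` digit_seqs \<subseteq> carrier G" using expand_in_carrier by blast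
    show "carrier G \<subseteq> expand ` digit_seqs"
    proof
      fix g assume "g \<in> carrier G"
      then obtain N where "g \<in> H N" using carrier_eq_UN_H by blast
      then obtain a where a: "a \<in> digit_seqs" and "\<forall>k\<ge>N. a k = \<one>" and "digit_prod a N = g"
        using digit_prod_surj by blast
      then have "expand a = g" using expand_eq_digit_prod[OF a] by simp
      then show "g \<in> expand ` digit_seqs" using a by blast
    qed
  qed
qed

context
  fixes f :: "(nat \<Rightarrow> 'z) \<Rightarrow> 'a" and Zs :: "nat \<Rightarrow> 'z set" and e :: "nat \<Rightarrow> 'z"
  assumes infinite: "infinite (carrier G)"
    and bij: "bij_betw f (dprod natLeq Zs e) (carrier G)"
    and levels: "\<And>x y n. x \<in> dprod natLeq Zs e \<Longrightarrow> y \<in> dprod natLeq Zs e \<Longrightarrow>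
                   f x <# H n = f y <# H n \<longleftrightarrow> (\<forall>k\<ge>n. x k = y k)"
begin

lemma prec_mapping_dprod_to_grp:
  "prec_mapping (dprod natLeq Zs e) (Field natLeq) (dprod_ball natLeq Zs e)
     (carrier G) (grp_radii G) (grp_ball G) f"
  unfolding prec_mapping_def
proof (intro conjI ballI)
  fix n :: nat
  have f_in: "f x \<in> carrier G" if "x \<in> dprod natLeq Zs e" for x using bij that bij_betwE by blast
  have "H n \<in> grp_radii G"
    using grp_radii_iff[OF countable_carrier infinite] H_subset_carrier finite_H
      subgroup.one_closed[OF subgroup_H]
    by blast
  moreover have "f ` dprod_ball natLeq Zs e x n \<subseteq> grp_ball G (f x) (H n)"
    if x: "x \<in> dprod natLeq Zs e" for x
  proof
    fix w assume "w \<in> f ` dprod_ball natLeq Zs e x n"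
    then obtain y where "y \<in> dprod_ball natLeq Zs e x n" and w: "w = f y" by blast
    then have y: "y \<in> dprod natLeq Zs e" "\<forall>k\<ge>n. y k = x k" using dprod_ball_natLeq_iff by blast+
    have "f x <# H n = f y <# H n" using levels[OF x y(1)] y(2) by simp
    then show "w \<in> grp_ball G (f x) (H n)"
      using w l_coset_self[OF subgroup_H f_in[OF y(1)]] unfolding grp_ball_def by simp
  qed
  ultimately show "\<exists>A\<in>grp_radii G. \<forall>x\<in>dprod natLeq Zs e.
      f ` dprod_ball natLeq Zs e x n \<subseteq> grp_ball G (f x) A"
    by blast
qed (use bij bij_betwE in blast)

lemma prec_mapping_grp_to_dprod:
  "prec_mapping (carrier G) (grp_radii G) (grp_ball G)
     (dprod natLeq Zs e) (Field natLeq) (dprod_ball natLeq Zs e) (inv_into (dprod natLeq Zs e) f)"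
  (is "prec_mapping _ _ _ ?D _ _ ?g")
  unfolding prec_mapping_def
proof (intro conjI ballI)
  have g_in: "?g z \<in> ?D" if "z \<in> carrier G" for z
    using bij_betw_inv_into[OF bij] that bij_betwE by blast
  have f_g: "f (?g z) = z" if "z \<in> carrier G" for z using bij that bij_betw_inv_into_right by metis
  fix A assume "A \<in> grp_radii G"
  then obtain n where A: "A \<subseteq> H n"
    using grp_radii_iff[OF countable_carrier infinite] finite_subset_H by meson
  show "\<exists>n\<in>Field natLeq. \<forall>x\<in>carrier G. ?g ` grp_ball G x A \<subseteq> dprod_ball natLeq Zs e (?g x) n"
  proof (intro bexI ballI subsetI)
    fix x w assume x: "x \<in> carrier G" and "w \<in> ?g ` grp_ball G x A"
    then obtain z where z: "z \<in> x <# H n" and w: "w = ?g z"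
      using A unfolding grp_ball_def l_coset_def by blast
    have zc: "z \<in> carrier G" using l_coset_carrier[OF z x subgroup_H] .
    have "z <# H n = x <# H n" using l_repr_independence[OF z x subgroup_H] by simp
    then have "\<forall>k\<ge>n. ?g z k = ?g x k" using levels[OF g_in[OF zc] g_in[OF x]] f_g x zc by simp
    then show "w \<in> dprod_ball natLeq Zs e (?g x) n"
      using w g_in[OF zc] dprod_ball_natLeq_iff by blast
  qed (simp add: Field_natLeq)
qed (use bij_betw_inv_into[OF bij] bij_betwE in blast)

lemma asymorphic_dprod_natLeq:
  "asymorphic (carrier G) (grp_radii G) (grp_ball G)
     (dprod natLeq Zs e) (Field natLeq) (dprod_ball natLeq Zs e)"
proof -
  let ?g = "inv_into (dprod natLeq Zs e) f"
  have "prec_mapping (dprod natLeq Zs e) (Field natLeq) (dprod_ball natLeq Zs e) (carrier G) (grp_radii G)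
      (grp_ball G) (inv_into (carrier G) ?g) \<longleftrightarrow>
    prec_mapping (dprod natLeq Zs e) (Field natLeq) (dprod_ball natLeq Zs e) (carrier G) (grp_radii G)
      (grp_ball G) f"
    by (rule prec_mapping_cong) (auto simp: dprod_ball_natLeq_iff inv_into_inv_into_eq[OF bij])
  then have "prec_mapping (dprod natLeq Zs e) (Field natLeq) (dprod_ball natLeq Zs e) (carrier G)
      (grp_radii G) (grp_ball G) (inv_into (carrier G) ?g)"
    using prec_mapping_dprod_to_grp by blast
  then show ?thesis
    unfolding asymorphic_def asymorphism_def
    using bij_betw_inv_into[OF bij] prec_mapping_grp_to_dprod by blast
qed

end

text \<open>The theorem asks for coordinates in \<open>nat\<close>, so the transversal elements are coded by
  \<open>to_nat_on\<close>.\<close>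

lemma asymorphic_dprod_coded_transversals:
  assumes "infinite (carrier G)"
  defines "c \<equiv> to_nat_on (carrier G)"
  shows "asymorphic (carrier G) (grp_radii G) (grp_ball G)
           (dprod natLeq (\<lambda>n. c ` transv n) (\<lambda>_. c \<one>)) (Field natLeq)
           (dprod_ball natLeq (\<lambda>n. c ` transv n) (\<lambda>_. c \<one>))"
proof -
  let ?d = "from_nat_into (carrier G)" and ?D = "dprod natLeq (\<lambda>n. c ` transv n) (\<lambda>_. c \<one>)"
  have d_c: "?d (c z) = z" if "z \<in> carrier G" for z
    unfolding c_def using from_nat_into_to_nat_on[OF countable_carrier that] .
  have relabel: "bij_betw (\<lambda>x. ?d \<circ> x) ?D digit_seqs"
    unfolding digit_seqs_def
    by (rule dprod_natLeq_relabel(1)[where A = "carrier G"]) (use d_c transv_subset_carrier in auto)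
  have relabel_eq: "?d (x k) = ?d (y k) \<longleftrightarrow> x k = y k" if "x \<in> ?D" and "y \<in> ?D" for x y k
    by (rule dprod_natLeq_relabel(2)[where A = "carrier G"]) (use d_c transv_subset_carrier that in auto)
  have "bij_betw (expand \<circ> (\<lambda>x. ?d \<circ> x)) ?D (carrier G)"
    using bij_betw_trans[OF relabel bij_betw_expand] .
  moreover have "(expand \<circ> (\<lambda>x. ?d \<circ> x)) x <# H n = (expand \<circ> (\<lambda>x. ?d \<circ> x)) y <# H n
      \<longleftrightarrow> (\<forall>k\<ge>n. x k = y k)" if x: "x \<in> ?D" and y: "y \<in> ?D" for x y n
  proof -
    have "?d \<circ> x \<in> digit_seqs" "?d \<circ> y \<in> digit_seqs"
      using relabel x y bij_betwE by blast+
    then show ?thesis using expand_coset_eq_iff relabel_eq[OF x y] by simp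
  qed
  ultimately show ?thesis by (rule asymorphic_dprod_natLeq[OF assms(1)])
qed

end

lemma (in group) finite_subgroup_chain_exists:
  assumes lf: "locally_finite_group G" and cnt: "countable (carrier G)"
  obtains H where "finite_subgroup_chain G H"
proof -
  let ?P = "\<lambda>n K. subgroup K G \<and> finite K \<and> (n = 0 \<longrightarrow> K = {\<one>})"
  let ?enum = "from_nat_into (carrier G)"
  have enum_in: "?enum n \<in> carrier G" for n
    using from_nat_into[of "carrier G"] one_closed by blast
  have step: "\<exists>K'. ?P (Suc n) K' \<and> K \<union> {?enum n} \<subseteq> K'" if "?P n K" for n K
  proof -
    have "K \<union> {?enum n} \<subseteq> carrier G" and "finite (K \<union> {?enum n})"
      using that subgroup.subset enum_in by auto
    then obtain K' where "subgroup K' G" "finite K'" "K \<union> {?enum n} \<subseteq> K'"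
      using lf unfolding locally_finite_group_def by blast
    then show ?thesis by auto
  qed
  have "\<exists>H. \<forall>n. ?P n (H n) \<and> H n \<union> {?enum n} \<subseteq> H (Suc n)"
  proof (rule dependent_nat_choice[where P = ?P and Q = "\<lambda>n K K'. K \<union> {?enum n} \<subseteq> K'"])
    show "\<exists>K. ?P 0 K" using triv_subgroup by blast
  qed (rule step)
  then obtain H where H: "\<And>n. ?P n (H n)" and grow: "\<And>n. H n \<union> {?enum n} \<subseteq> H (Suc n)"
    by blast
  have "carrier G \<subseteq> (\<Union>n. H n)"
  proof
    fix g assume "g \<in> carrier G"
    then have "g = ?enum (to_nat_on (carrier G) g)" using from_nat_into_to_nat_on[OF cnt] by simp
    then show "g \<in> (\<Union>n. H n)" using grow[of "to_nat_on (carrier G) g"] by blast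
  qed
  moreover have "(\<Union>n. H n) \<subseteq> carrier G" using H subgroup.subset by blast
  ultimately have "finite_subgroup_chain G H"
    using H grow by (intro finite_subgroup_chain.intro finite_subgroup_chain_axioms.intro is_group) auto
  then show ?thesis by (rule that)
qed

theorem corollary1:
  fixes G :: "('a, 'b) monoid_scheme"
  assumes "group G"
    and "countable (carrier G)"
    and "infinite (carrier G)"
    and "locally_finite_group G"
  shows "\<exists>(r :: (nat \<times> nat) set) (Zs :: nat \<Rightarrow> nat set) (e :: nat \<Rightarrow> nat).
           Well_order r \<and>
           (\<forall>i\<in>Field r. finite (Zs i) \<and> e i \<in> Zs i) \<and>
           asymorphic (carrier G) (grp_radii G) (grp_ball G)
                      (dprod r Zs e) (Field r) (dprod_ball r Zs e)"
proof -
  interpret group G by fact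
  obtain H where "finite_subgroup_chain G H"
    using finite_subgroup_chain_exists assms(2,4) by blast
  then interpret finite_subgroup_chain G H .
  let ?c = "to_nat_on (carrier G)"
  have "finite (?c ` transv n) \<and> ?c \<one>\<^bsub>G\<^esub> \<in> ?c ` transv n" for n
    using finite_H[of "Suc n"] one_in_transv unfolding left_transversal_def by simp
  then show ?thesis
    using natLeq_Well_order asymorphic_dprod_coded_transversals[OF assms(3)]
    by (intro exI[of _ natLeq] exI[of _ "\<lambda>n. ?c ` transv n"] exI[of _ "\<lambda>_. ?c \<one>\<^bsub>G\<^esub>"]) simp
qed

end
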